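(* Let $F,G\colon I\to\mathsf{Top}$ be diagrams of topological spaces and $\alpha\colon F\Rightarrow G$ a natural transformation such that each $\alpha_i\colon F(i)\to G(i)$ is a closed inclusion. Suppose that for each $i\in I$ the commutative square formed by $\alpha_i$, the colimit maps $\mu_i\colon F(i)\to\mathrm{colim}(F)$, $\nu_i\colon G(i)\to\mathrm{colim}(G)$ and the induced map $\alpha_*\colon\mathrm{colim}(F)\to\mathrm{colim}(G)$ is Cartesian in the category of sets (i.e. the canonical function from $F(i)$ to the set-theoretic pullback of $G(i)\to\mathrm{colim}(G)\leftarrow\mathrm{colim}(F)$ is a bijection). Then $\alpha_*$ is a closed inclusion. The same holds with "closed inclusion" replaced by "open inclusion" throughout. *)

theory Defs
  imports "HOL-Analysis.Analysis"
begin

record ('i, 'm) cat =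
  Obj :: "'i set"
  Arr :: "'m set"
  Dom :: "'m \<Rightarrow> 'i"
  Cod :: "'m \<Rightarrow> 'i"
  Idm :: "'i \<Rightarrow> 'm"
  Comp :: "'m \<Rightarrow> 'm \<Rightarrow> 'm"   (* Comp g f = g \<circ> f, defined when Cod f = Dom g *)

definition is_category :: "('i, 'm) cat \<Rightarrow> bool" where
  "is_category C \<longleftrightarrow>
     (\<forall>f\<in>Arr C. Dom C f \<in> Obj C \<and> Cod C f \<in> Obj C) \<and>
     (\<forall>i\<in>Obj C. Idm C i \<in> Arr C \<and> Dom C (Idm C i) = i \<and> Cod C (Idm C i) = i) \<and>
     (\<forall>f\<in>Arr C. \<forall>g\<in>Arr C. Cod C f = Dom C g \<longrightarrow>
        Comp C g f \<in> Arr C \<and> Dom C (Comp C g f) = Dom C f \<and> Cod C (Comp C g f) = Cod C g) \<and>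
     (\<forall>f\<in>Arr C. Comp C f (Idm C (Dom C f)) = f \<and> Comp C (Idm C (Cod C f)) f = f) \<and>
     (\<forall>f\<in>Arr C. \<forall>g\<in>Arr C. \<forall>h\<in>Arr C. Cod C f = Dom C g \<longrightarrow> Cod C g = Dom C h \<longrightarrow>
        Comp C h (Comp C g f) = Comp C (Comp C h g) f)"

text \<open>A diagram F : I \<rightarrow> Top is given by its object part F (spaces, all on a common
  ambient type) and its arrow part Fm (continuous maps).\<close>

definition top_diagram :: "('i, 'm) cat \<Rightarrow> ('i \<Rightarrow> 'a topology) \<Rightarrow> ('m \<Rightarrow> 'a \<Rightarrow> 'a) \<Rightarrow> bool" where
  "top_diagram C F Fm \<longleftrightarrow>
     is_category C \<and>
     (\<forall>f\<in>Arr C. continuous_map (F (Dom C f)) (F (Cod C f)) (Fm f)) \<and>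
     (\<forall>i\<in>Obj C. \<forall>x\<in>topspace (F i). Fm (Idm C i) x = x) \<and>
     (\<forall>f\<in>Arr C. \<forall>g\<in>Arr C. Cod C f = Dom C g \<longrightarrow>
        (\<forall>x\<in>topspace (F (Dom C f)). Fm (Comp C g f) x = Fm g (Fm f x)))"

definition nat_trans ::
  "('i, 'm) cat \<Rightarrow> ('i \<Rightarrow> 'a topology) \<Rightarrow> ('m \<Rightarrow> 'a \<Rightarrow> 'a)
     \<Rightarrow> ('i \<Rightarrow> 'b topology) \<Rightarrow> ('m \<Rightarrow> 'b \<Rightarrow> 'b) \<Rightarrow> ('i \<Rightarrow> 'a \<Rightarrow> 'b) \<Rightarrow> bool" where
  "nat_trans C F Fm G Gm \<alpha> \<longleftrightarrow>
     (\<forall>i\<in>Obj C. continuous_map (F i) (G i) (\<alpha> i)) \<and>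
     (\<forall>f\<in>Arr C. \<forall>x\<in>topspace (F (Dom C f)).
        \<alpha> (Cod C f) (Fm f x) = Gm f (\<alpha> (Dom C f) x))"

text \<open>Disjoint union of the spaces, modulo the equivalence relation generated by
  (i, x) ~ (j, F(f) x) for f : i \<rightarrow> j, with the quotient (final) topology.\<close>

definition colim_carrier0 :: "('i, 'm) cat \<Rightarrow> ('i \<Rightarrow> 'a topology) \<Rightarrow> ('i \<times> 'a) set" where
  "colim_carrier0 C F = Sigma (Obj C) (\<lambda>i. topspace (F i))"

definition colim_gen :: "('i, 'm) cat \<Rightarrow> ('i \<Rightarrow> 'a topology) \<Rightarrow> ('m \<Rightarrow> 'a \<Rightarrow> 'a) \<Rightarrow> (('i \<times> 'a) \<times> ('i \<times> 'a)) set" where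
  "colim_gen C F Fm = {((Dom C f, x), (Cod C f, Fm f x)) | f x. f \<in> Arr C \<and> x \<in> topspace (F (Dom C f))}"

definition colim_rel :: "('i, 'm) cat \<Rightarrow> ('i \<Rightarrow> 'a topology) \<Rightarrow> ('m \<Rightarrow> 'a \<Rightarrow> 'a) \<Rightarrow> (('i \<times> 'a) \<times> ('i \<times> 'a)) set" where
  "colim_rel C F Fm = (colim_gen C F Fm \<union> (colim_gen C F Fm)\<inverse>)\<^sup>*"

definition colim_inj :: "('i, 'm) cat \<Rightarrow> ('i \<Rightarrow> 'a topology) \<Rightarrow> ('m \<Rightarrow> 'a \<Rightarrow> 'a) \<Rightarrow> 'i \<Rightarrow> 'a \<Rightarrow> ('i \<times> 'a) set" where
  "colim_inj C F Fm i x = colim_rel C F Fm `` {(i, x)}"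

definition colim_set :: "('i, 'm) cat \<Rightarrow> ('i \<Rightarrow> 'a topology) \<Rightarrow> ('m \<Rightarrow> 'a \<Rightarrow> 'a) \<Rightarrow> ('i \<times> 'a) set set" where
  "colim_set C F Fm = (\<lambda>(i, x). colim_inj C F Fm i x) ` colim_carrier0 C F"

definition colim_top :: "('i, 'm) cat \<Rightarrow> ('i \<Rightarrow> 'a topology) \<Rightarrow> ('m \<Rightarrow> 'a \<Rightarrow> 'a) \<Rightarrow> ('i \<times> 'a) set topology" where
  "colim_top C F Fm = topology (\<lambda>U. U \<subseteq> colim_set C F Fm \<and>
     (\<forall>i\<in>Obj C. openin (F i) {x \<in> topspace (F i). colim_inj C F Fm i x \<in> U}))"

definition colim_map ::
  "('i, 'm) cat \<Rightarrow> ('i \<Rightarrow> 'b topology) \<Rightarrow> ('m \<Rightarrow> 'b \<Rightarrow> 'b) \<Rightarrow> ('i \<Rightarrow> 'a \<Rightarrow> 'b)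
     \<Rightarrow> ('i \<times> 'a) set \<Rightarrow> ('i \<times> 'b) set" where
  "colim_map C G Gm \<alpha> c = (let p = (SOME p. p \<in> c) in colim_inj C G Gm (fst p) (\<alpha> (fst p) (snd p)))"

definition closed_inclusion :: "'a topology \<Rightarrow> 'b topology \<Rightarrow> ('a \<Rightarrow> 'b) \<Rightarrow> bool" where
  "closed_inclusion X Y f \<longleftrightarrow> embedding_map X Y f \<and> closedin Y (f ` topspace X)"

definition open_inclusion :: "'a topology \<Rightarrow> 'b topology \<Rightarrow> ('a \<Rightarrow> 'b) \<Rightarrow> bool" where
  "open_inclusion X Y f \<longleftrightarrow> embedding_map X Y f \<and> openin Y (f ` topspace X)"

definition cartesian_square_set ::
  "'a set \<Rightarrow> 'b set \<Rightarrow> 'c set \<Rightarrow> ('a \<Rightarrow> 'b) \<Rightarrow> ('a \<Rightarrow> 'c) \<Rightarrow> ('b \<Rightarrow> 'd) \<Rightarrow> ('c \<Rightarrow> 'd) \<Rightarrow> bool" where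
  "cartesian_square_set A B C a m n g \<longleftrightarrow>
     bij_betw (\<lambda>x. (a x, m x)) A {(y, z). y \<in> B \<and> z \<in> C \<and> n y = g z}"

end

theory Submission
  imports Defs
begin

(* A set is open (closed) in the colimit iff its preimage under every \<mu>\<^sub>i is.
   Cartesianness of the squares gives \<nu>\<^sub>i\<^sup>-\<^sup>1(\<alpha>\<^sub>* S) = \<alpha>\<^sub>i(\<mu>\<^sub>i\<^sup>-\<^sup>1 S) for every S, so \<alpha>\<^sub>* is a closed
   (open) map as soon as every \<alpha>\<^sub>i is; it also forces \<alpha>\<^sub>* to be injective when every \<alpha>\<^sub>i is,
   and \<alpha>\<^sub>* is continuous by naturality. A continuous injective closed (open) map is a closed
   (open) inclusion. *)

lemma closed_inclusion_iff:
  "closed_inclusion X Y f \<longleftrightarrow>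
     continuous_map X Y f \<and> closed_map X Y f \<and> inj_on f (topspace X)"
proof
  assume "closed_inclusion X Y f"
  then have emb: "embedding_map X Y f" and closed: "closedin Y (f ` topspace X)"
    by (simp_all add: closed_inclusion_def)
  then have "homeomorphic_map X (subtopology Y (f ` topspace X)) f"
    by (simp add: embedding_map_def)
  then show "continuous_map X Y f \<and> closed_map X Y f \<and> inj_on f (topspace X)"
    using embedding_imp_closed_map[OF emb closed]
    by (meson continuous_map_in_subtopology homeomorphic_imp_continuous_map
        homeomorphic_imp_injective_map)
next
  assume "continuous_map X Y f \<and> closed_map X Y f \<and> inj_on f (topspace X)"
  then show "closed_inclusion X Y f"
    by (meson closed_inclusion_def closed_map_def closedin_topspace injective_closed_imp_embedding_map)
qed

lemma open_inclusion_iff: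
  "open_inclusion X Y f \<longleftrightarrow>
     continuous_map X Y f \<and> open_map X Y f \<and> inj_on f (topspace X)"
proof
  assume "open_inclusion X Y f"
  then have emb: "embedding_map X Y f" and image_open: "openin Y (f ` topspace X)"
    by (simp_all add: open_inclusion_def)
  then have "homeomorphic_map X (subtopology Y (f ` topspace X)) f"
    by (simp add: embedding_map_def)
  then show "continuous_map X Y f \<and> open_map X Y f \<and> inj_on f (topspace X)"
    using image_open
    by (meson continuous_map_in_subtopology homeomorphic_imp_continuous_map
        homeomorphic_imp_injective_map homeomorphic_imp_open_map open_map_from_open_subtopology)
next
  assume "continuous_map X Y f \<and> open_map X Y f \<and> inj_on f (topspace X)"
  then show "open_inclusion X Y f"
    by (meson open_inclusion_def open_map_def openin_topspace injective_open_imp_embedding_map)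
qed

lemma cartesian_square_set_preimage_image:
  assumes "cartesian_square_set A B C a m n g" and "S \<subseteq> C"
  shows "{y \<in> B. n y \<in> g ` S} = a ` {x \<in> A. m x \<in> S}"
proof -
  have pullback: "(\<lambda>x. (a x, m x)) ` A = {(y, z). y \<in> B \<and> z \<in> C \<and> n y = g z}"
    using assms(1) by (simp add: cartesian_square_set_def bij_betw_def)
  show ?thesis
  proof
    show "{y \<in> B. n y \<in> g ` S} \<subseteq> a ` {x \<in> A. m x \<in> S}"
    proof
      fix y assume "y \<in> {y \<in> B. n y \<in> g ` S}"
      then obtain z where "y \<in> B" "z \<in> S" "n y = g z" by auto
      then have "(y, z) \<in> (\<lambda>x. (a x, m x)) ` A" using pullback assms(2) by auto
      then show "y \<in> a ` {x \<in> A. m x \<in> S}" using \<open>z \<in> S\<close> by auto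
    qed
    show "a ` {x \<in> A. m x \<in> S} \<subseteq> {y \<in> B. n y \<in> g ` S}"
      using pullback by (auto simp: set_eq_iff)
  qed
qed

lemma cartesian_square_set_fibre_eq:
  assumes "cartesian_square_set A B C a m n g" and "inj_on a A"
    and "x \<in> A" and "z \<in> C" and "g z = g (m x)"
  shows "z = m x"
proof -
  have pullback: "(\<lambda>x. (a x, m x)) ` A = {(y, z). y \<in> B \<and> z \<in> C \<and> n y = g z}"
    using assms(1) by (simp add: cartesian_square_set_def bij_betw_def)
  then have "a x \<in> B" "n (a x) = g (m x)" using assms(3) by auto
  then have "(a x, z) \<in> (\<lambda>x. (a x, m x)) ` A" using pullback assms(4,5) by auto
  then obtain x' where "x' \<in> A" "a x' = a x" "z = m x'" by auto
  with assms(2,3) show ?thesis by (metis inj_onD)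
qed

lemma istopology_colim:
  "istopology (\<lambda>U. U \<subseteq> colim_set C F Fm \<and>
     (\<forall>i\<in>Obj C. openin (F i) {x \<in> topspace (F i). colim_inj C F Fm i x \<in> U}))"
proof -
  have Int: "{x \<in> topspace (F i). colim_inj C F Fm i x \<in> S \<inter> T} =
      {x \<in> topspace (F i). colim_inj C F Fm i x \<in> S} \<inter> {x \<in> topspace (F i). colim_inj C F Fm i x \<in> T}"
    for i S T by auto
  have Union: "{x \<in> topspace (F i). colim_inj C F Fm i x \<in> \<Union>K} =
      (\<Union>U\<in>K. {x \<in> topspace (F i). colim_inj C F Fm i x \<in> U})" for i K by auto
  show ?thesis
    unfolding istopology_def Int Union by (auto intro!: openin_Union)
qed

lemma openin_colim_top:
  "openin (colim_top C F Fm) U \<longleftrightarrow> U \<subseteq> colim_set C F Fm \<and>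
     (\<forall>i\<in>Obj C. openin (F i) {x \<in> topspace (F i). colim_inj C F Fm i x \<in> U})"
  unfolding colim_top_def by (subst topology_inverse'[OF istopology_colim]) (rule refl)

lemma colim_inj_in_colim_set:
  "i \<in> Obj C \<Longrightarrow> x \<in> topspace (F i) \<Longrightarrow> colim_inj C F Fm i x \<in> colim_set C F Fm"
  by (auto simp: colim_set_def colim_carrier0_def)

lemma colim_setE:
  assumes "c \<in> colim_set C F Fm"
  obtains i x where "i \<in> Obj C" "x \<in> topspace (F i)" "c = colim_inj C F Fm i x"
  using assms by (auto simp: colim_set_def colim_carrier0_def)

lemma topspace_colim_top: "topspace (colim_top C F Fm) = colim_set C F Fm"
proof -
  have "{x \<in> topspace (F i). colim_inj C F Fm i x \<in> colim_set C F Fm} = topspace (F i)"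
    if "i \<in> Obj C" for i
    using that by (auto simp: colim_inj_in_colim_set)
  then have "openin (colim_top C F Fm) (colim_set C F Fm)"
    by (simp add: openin_colim_top)
  then show ?thesis
    using openin_subset openin_colim_top[of C F Fm "topspace (colim_top C F Fm)"] by blast
qed

lemma closedin_colim_top:
  "closedin (colim_top C F Fm) S \<longleftrightarrow> S \<subseteq> colim_set C F Fm \<and>
     (\<forall>i\<in>Obj C. closedin (F i) {x \<in> topspace (F i). colim_inj C F Fm i x \<in> S})"
proof -
  have "{x \<in> topspace (F i). colim_inj C F Fm i x \<in> colim_set C F Fm - S}
      = topspace (F i) - {x \<in> topspace (F i). colim_inj C F Fm i x \<in> S}" if "i \<in> Obj C" for i
    using that by (auto simp: colim_inj_in_colim_set)
  then show ?thesis
    unfolding closedin_def topspace_colim_top openin_colim_top by auto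
qed

lemma equiv_colim_rel: "equiv UNIV (colim_rel C F Fm)"
  unfolding colim_rel_def equiv_def
  by (simp add: refl_rtrancl sym_rtrancl sym_Un_converse trans_rtrancl)

lemma nat_trans_in_topspace:
  "nat_trans C F Fm G Gm \<alpha> \<Longrightarrow> i \<in> Obj C \<Longrightarrow> x \<in> topspace (F i) \<Longrightarrow> \<alpha> i x \<in> topspace (G i)"
  unfolding nat_trans_def by (meson continuous_map_image_subset_topspace image_subset_iff)

lemma colim_gen_nat_trans:
  assumes "is_category C" and "nat_trans C F Fm G Gm \<alpha>"
    and "((i, x), (j, y)) \<in> colim_gen C F Fm"
  shows "((i, \<alpha> i x), (j, \<alpha> j y)) \<in> colim_gen C G Gm"
proof -
  obtain f where f: "f \<in> Arr C" "x \<in> topspace (F (Dom C f))"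
    and ij: "i = Dom C f" "j = Cod C f" and y: "y = Fm f x"
    using assms(3) by (auto simp: colim_gen_def)
  have "Dom C f \<in> Obj C"
    using assms(1) f(1) by (simp add: is_category_def)
  then have "\<alpha> (Dom C f) x \<in> topspace (G (Dom C f))"
    using nat_trans_in_topspace[OF assms(2)] f(2) by blast
  moreover have "\<alpha> (Cod C f) (Fm f x) = Gm f (\<alpha> (Dom C f) x)"
    using assms(2) f by (simp add: nat_trans_def)
  ultimately show ?thesis
    unfolding colim_gen_def ij y using f(1) by blast
qed

lemma colim_rel_nat_trans:
  assumes "is_category C" and "nat_trans C F Fm G Gm \<alpha>"
    and "((i, x), (j, y)) \<in> colim_rel C F Fm"
  shows "((i, \<alpha> i x), (j, \<alpha> j y)) \<in> colim_rel C G Gm"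
  using assms(3) unfolding colim_rel_def
proof (induction rule: rtrancl_induct2)
  case refl
  show ?case by simp
next
  case (step j y k z)
  then have "((j, \<alpha> j y), (k, \<alpha> k z)) \<in> colim_gen C G Gm \<union> (colim_gen C G Gm)\<inverse>"
    using colim_gen_nat_trans[OF assms(1,2)] by blast
  with step.IH show ?case by (rule rtrancl_into_rtrancl)
qed

text \<open>\<open>colim_map\<close> evaluates at a representative chosen by \<open>SOME\<close>; naturality of \<alpha>
  makes the result independent of that choice.\<close>

lemma colim_map_colim_inj:
  assumes "is_category C" and "nat_trans C F Fm G Gm \<alpha>"
  shows "colim_map C G Gm \<alpha> (colim_inj C F Fm i x) = colim_inj C G Gm i (\<alpha> i x)"
proof -
  define p where "p = (SOME p. p \<in> colim_inj C F Fm i x)"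
  have "(i, x) \<in> colim_inj C F Fm i x"
    by (simp add: colim_inj_def colim_rel_def)
  then have "p \<in> colim_inj C F Fm i x"
    unfolding p_def by (rule someI)
  then have "((i, x), (fst p, snd p)) \<in> colim_rel C F Fm"
    by (simp add: colim_inj_def)
  then have "((i, \<alpha> i x), (fst p, \<alpha> (fst p) (snd p))) \<in> colim_rel C G Gm"
    by (rule colim_rel_nat_trans[OF assms])
  then have "colim_inj C G Gm i (\<alpha> i x) = colim_inj C G Gm (fst p) (\<alpha> (fst p) (snd p))"
    unfolding colim_inj_def by (rule equiv_class_eq[OF equiv_colim_rel])
  then show ?thesis
    by (simp add: colim_map_def Let_def p_def)
qed

lemma colim_map_in_colim_set:
  assumes "is_category C" and "nat_trans C F Fm G Gm \<alpha>" and "c \<in> colim_set C F Fm"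
  shows "colim_map C G Gm \<alpha> c \<in> colim_set C G Gm"
proof -
  obtain i x where i: "i \<in> Obj C" and x: "x \<in> topspace (F i)" and "c = colim_inj C F Fm i x"
    using assms(3) by (rule colim_setE)
  then show ?thesis
    using nat_trans_in_topspace[OF assms(2) i x]
    by (simp add: colim_map_colim_inj[OF assms(1,2)] colim_inj_in_colim_set)
qed

lemma continuous_map_colim_map:
  assumes "is_category C" and "nat_trans C F Fm G Gm \<alpha>"
  shows "continuous_map (colim_top C F Fm) (colim_top C G Gm) (colim_map C G Gm \<alpha>)"
  unfolding continuous_map_def topspace_colim_top
proof (intro conjI allI impI)
  show "colim_map C G Gm \<alpha> \<in> colim_set C F Fm \<rightarrow> colim_set C G Gm"
    using colim_map_in_colim_set[OF assms] by blast
  fix U assume U: "openin (colim_top C G Gm) U"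
  let ?V = "{c \<in> colim_set C F Fm. colim_map C G Gm \<alpha> c \<in> U}"
  show "openin (colim_top C F Fm) ?V"
    unfolding openin_colim_top
  proof (intro conjI ballI)
    fix i assume i: "i \<in> Obj C"
    have "continuous_map (F i) (G i) (\<alpha> i)"
      using assms(2) i by (simp add: nat_trans_def)
    moreover have "openin (G i) {y \<in> topspace (G i). colim_inj C G Gm i y \<in> U}"
      using U i by (simp add: openin_colim_top)
    moreover have "{x \<in> topspace (F i). colim_inj C F Fm i x \<in> ?V}
        = {x \<in> topspace (F i). \<alpha> i x \<in> {y \<in> topspace (G i). colim_inj C G Gm i y \<in> U}}"
      using i nat_trans_in_topspace[OF assms(2) i]
      by (auto simp: colim_map_colim_inj[OF assms] colim_inj_in_colim_set)
    ultimately show "openin (F i) {x \<in> topspace (F i). colim_inj C F Fm i x \<in> ?V}"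
      by (simp only: openin_continuous_map_preimage)
  qed auto
qed

lemma inj_on_colim_map:
  assumes "\<forall>i\<in>Obj C. cartesian_square_set (topspace (F i)) (topspace (G i)) (colim_set C F Fm)
           (\<alpha> i) (colim_inj C F Fm i) (colim_inj C G Gm i) (colim_map C G Gm \<alpha>)"
    and "\<forall>i\<in>Obj C. inj_on (\<alpha> i) (topspace (F i))"
  shows "inj_on (colim_map C G Gm \<alpha>) (colim_set C F Fm)"
proof (rule inj_onI)
  fix c c' assume c: "c \<in> colim_set C F Fm" and c': "c' \<in> colim_set C F Fm"
    and eq: "colim_map C G Gm \<alpha> c = colim_map C G Gm \<alpha> c'"
  obtain i x where "i \<in> Obj C" "x \<in> topspace (F i)" "c = colim_inj C F Fm i x"
    using c by (rule colim_setE)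
  then show "c = c'"
    using cartesian_square_set_fibre_eq[of _ _ _ "\<alpha> i" _ _ _ x c'] assms c' eq by metis
qed

lemma closed_map_colim_map:
  assumes "is_category C" and "nat_trans C F Fm G Gm \<alpha>"
    and "\<forall>i\<in>Obj C. cartesian_square_set (topspace (F i)) (topspace (G i)) (colim_set C F Fm)
           (\<alpha> i) (colim_inj C F Fm i) (colim_inj C G Gm i) (colim_map C G Gm \<alpha>)"
    and "\<forall>i\<in>Obj C. closed_map (F i) (G i) (\<alpha> i)"
  shows "closed_map (colim_top C F Fm) (colim_top C G Gm) (colim_map C G Gm \<alpha>)"
  unfolding closed_map_def
proof (intro allI impI)
  fix S assume "closedin (colim_top C F Fm) S"
  then have "S \<subseteq> colim_set C F Fm"
    and "\<forall>i\<in>Obj C. closedin (F i) {x \<in> topspace (F i). colim_inj C F Fm i x \<in> S}"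
    by (simp_all add: closedin_colim_top)
  then show "closedin (colim_top C G Gm) (colim_map C G Gm \<alpha> ` S)"
    using assms(3,4) colim_map_in_colim_set[OF assms(1,2)]
    by (auto simp: closedin_colim_top closed_map_def cartesian_square_set_preimage_image)
qed

lemma open_map_colim_map:
  assumes "is_category C" and "nat_trans C F Fm G Gm \<alpha>"
    and "\<forall>i\<in>Obj C. cartesian_square_set (topspace (F i)) (topspace (G i)) (colim_set C F Fm)
           (\<alpha> i) (colim_inj C F Fm i) (colim_inj C G Gm i) (colim_map C G Gm \<alpha>)"
    and "\<forall>i\<in>Obj C. open_map (F i) (G i) (\<alpha> i)"
  shows "open_map (colim_top C F Fm) (colim_top C G Gm) (colim_map C G Gm \<alpha>)"
  unfolding open_map_def
proof (intro allI impI)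
  fix S assume "openin (colim_top C F Fm) S"
  then have "S \<subseteq> colim_set C F Fm"
    and "\<forall>i\<in>Obj C. openin (F i) {x \<in> topspace (F i). colim_inj C F Fm i x \<in> S}"
    by (simp_all add: openin_colim_top)
  then show "openin (colim_top C G Gm) (colim_map C G Gm \<alpha> ` S)"
    using assms(3,4) colim_map_in_colim_set[OF assms(1,2)]
    by (auto simp: openin_colim_top open_map_def cartesian_square_set_preimage_image)
qed

theorem lemma6p1:
  fixes C :: "('i, 'm) cat"
    and F :: "'i \<Rightarrow> 'a topology" and Fm :: "'m \<Rightarrow> 'a \<Rightarrow> 'a"
    and G :: "'i \<Rightarrow> 'b topology" and Gm :: "'m \<Rightarrow> 'b \<Rightarrow> 'b"
    and \<alpha> :: "'i \<Rightarrow> 'a \<Rightarrow> 'b"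
  assumes "top_diagram C F Fm"
    and "top_diagram C G Gm"
    and "nat_trans C F Fm G Gm \<alpha>"
    and "\<forall>i\<in>Obj C. cartesian_square_set (topspace (F i)) (topspace (G i)) (colim_set C F Fm)
           (\<alpha> i) (colim_inj C F Fm i) (colim_inj C G Gm i) (colim_map C G Gm \<alpha>)"
  shows "((\<forall>i\<in>Obj C. closed_inclusion (F i) (G i) (\<alpha> i)) \<longrightarrow>
            closed_inclusion (colim_top C F Fm) (colim_top C G Gm) (colim_map C G Gm \<alpha>))
       \<and> ((\<forall>i\<in>Obj C. open_inclusion (F i) (G i) (\<alpha> i)) \<longrightarrow>
            open_inclusion (colim_top C F Fm) (colim_top C G Gm) (colim_map C G Gm \<alpha>))"
proof -
  have cat: "is_category C"
    using assms(1) by (simp add: top_diagram_def)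
  have inj: "inj_on (colim_map C G Gm \<alpha>) (topspace (colim_top C F Fm))"
    if "\<forall>i\<in>Obj C. inj_on (\<alpha> i) (topspace (F i))"
    using inj_on_colim_map[OF assms(4) that] by (simp add: topspace_colim_top)
  show ?thesis
    unfolding closed_inclusion_iff open_inclusion_iff
    using continuous_map_colim_map[OF cat assms(3)] inj
      closed_map_colim_map[OF cat assms(3,4)] open_map_colim_map[OF cat assms(3,4)]
    by blast
qed

end
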